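(* For every integer $k\ge 1$, the ordinary generating function $F^{-}_k(x)=\sum_{n\ge1} f^{(n)}_k x^n$, where $f^{(n)}_k$ is the number of trees $t\in\mathcal{T}_n$ with $\gamma(t)\le k$, satisfies $$F^{-}_k = x + (F^{-}_k)^2 - 2^{k-1}x^{k+1},$$ and consequently $$F^{-}_k(x)=\frac{1-\sqrt{1-4x+2^{k+1}x^{k+1}}}{2}.$$
   Context: $\mathcal{T}$ denotes the class of ordered (plane) rooted binary trees, in which every internal node has exactly two ordered children (left and right); the size of a tree is its number of leaves, and $\mathcal{T}_n$ is the set of such trees of size $n$. A tree is a caterpillar if every node is either a leaf or has at least one leaf among its direct children (the single-leaf tree is the caterpillar of size 1). For a tree $t$ and a node $v$, the subtree of $t$ at $v$ consists of $v$ together with all its descendants. $\gamma(t)$ is the largest size of a caterpillar that occurs as the subtree of $t$ at some node of $t$. *)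

theory Defs
  imports Complex_Main "HOL-Computational_Algebra.Formal_Power_Series"
begin

datatype btree = Leaf | Node btree btree

fun tsize :: "btree \<Rightarrow> nat" where
  "tsize Leaf = 1"
| "tsize (Node l r) = tsize l + tsize r"

fun caterpillar :: "btree \<Rightarrow> bool" where
  "caterpillar Leaf = True"
| "caterpillar (Node l r) = ((l = Leaf \<or> r = Leaf) \<and> caterpillar l \<and> caterpillar r)"

fun subtrees :: "btree \<Rightarrow> btree set" where
  "subtrees Leaf = {Leaf}"
| "subtrees (Node l r) = insert (Node l r) (subtrees l \<union> subtrees r)"

definition gamma :: "btree \<Rightarrow> nat" where
  "gamma t = Max (tsize ` {s \<in> subtrees t. caterpillar s})"

definition fcount :: "nat \<Rightarrow> nat \<Rightarrow> nat" where
  "fcount k n = card {t. tsize t = n \<and> gamma t \<le> k}"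

definition Fminus :: "nat \<Rightarrow> real fps" where
  "Fminus k = Abs_fps (\<lambda>n. if n = 0 then 0 else real (fcount k n))"

end

theory Submission
  imports Defs
begin

(* A tree t satisfies gamma t <= k iff every caterpillar subtree of t has at most k
   leaves ("t is k-bounded").  This condition is local: Node l r is k-bounded iff l and r
   are k-bounded and Node l r is not itself a caterpillar with more than k leaves.
   Hence the k-bounded trees with n >= 2 leaves are the pairs (l, r) of k-bounded trees
   with n leaves in total (counted by the convolution, i.e. the coefficient of F^2),
   minus the pairs forming a caterpillar with n > k leaves.  Since both children of a
   caterpillar are caterpillars with at most n - 1 leaves, such a bad pair exists only
   for n = k + 1, and then the bad pairs are all caterpillars with k + 1 leaves, of which
   there are 2^(k-1).  The closed form then
   follows from a general fact: a power series F with F(0) = 0 solving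
   F = X + F^2 - c X^m is (1 - sqrt(1 - 4X + 4c X^m)) / 2, because (1 - 2F)^2 equals
   the radicand and 1 - 2F has constant term 1. *)

lemma tsize_pos: "tsize t \<ge> 1"
  by (induction t) auto

lemma tsize_eq_1_iff: "tsize t = 1 \<longleftrightarrow> t = Leaf"
proof (cases t)
  case (Node l r)
  then show ?thesis using tsize_pos[of l] tsize_pos[of r] by auto
qed simp

lemma Leaf_in_subtrees: "Leaf \<in> subtrees t"
  by (induction t) auto

lemma self_in_subtrees: "t \<in> subtrees t"
  by (cases t) auto

lemma finite_subtrees: "finite (subtrees t)"
  by (induction t) auto

lemma tsize_subtree: "s \<in> subtrees t \<Longrightarrow> tsize s \<le> tsize t"
  by (induction t) auto

text \<open>There are only finitely many trees of each size: a tree of size n is a leaf or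
  a node whose children have sizes i and n - i with 1 <= i < n.\<close>

lemma finite_trees_of_size: "finite {t. tsize t = n}"
proof (induction n rule: less_induct)
  case (less n)
  let ?pairs = "\<Union>i\<in>{1..<n}. {t. tsize t = i} \<times> {t. tsize t = n - i}"
  have "{t. tsize t = n} \<subseteq> insert Leaf (case_prod Node ` ?pairs)"
  proof
    fix t assume "t \<in> {t. tsize t = n}"
    then show "t \<in> insert Leaf (case_prod Node ` ?pairs)"
    proof (cases t)
      case (Node l r)
      with \<open>t \<in> _\<close> tsize_pos[of l] tsize_pos[of r] have "(l, r) \<in> ?pairs"
        by auto
      then show ?thesis
        using Node by force
    qed simp
  qed
  moreover have "finite (insert Leaf (case_prod Node ` ?pairs))"
    using less by auto
  ultimately show ?case
    by (rule finite_subset)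
qed

section \<open>gamma t \<le> k as a local condition\<close>

definition bounded :: "nat \<Rightarrow> btree \<Rightarrow> bool" where
  "bounded k t \<longleftrightarrow> (\<forall>s\<in>subtrees t. caterpillar s \<longrightarrow> tsize s \<le> k)"

lemma gamma_le_iff_bounded: "gamma t \<le> k \<longleftrightarrow> bounded k t"
proof -
  let ?S = "tsize ` {s \<in> subtrees t. caterpillar s}"
  have "finite ?S" "?S \<noteq> {}"
    using finite_subtrees Leaf_in_subtrees[of t] by auto
  then show ?thesis
    unfolding gamma_def bounded_def by (auto simp: Max_le_iff)
qed

lemma bounded_Leaf: "bounded k Leaf \<longleftrightarrow> k \<ge> 1"
  by (simp add: bounded_def)

lemma bounded_Node:
  "bounded k (Node l r) \<longleftrightarrow>
     bounded k l \<and> bounded k r \<and> \<not> (caterpillar (Node l r) \<and> tsize l + tsize r > k)"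
  unfolding bounded_def by (auto simp del: caterpillar.simps)

lemma caterpillar_bounded: "caterpillar t \<Longrightarrow> bounded k t \<longleftrightarrow> tsize t \<le> k"
  unfolding bounded_def using self_in_subtrees tsize_subtree by fastforce

section \<open>Counting caterpillars\<close>

definition caterpillars :: "nat \<Rightarrow> btree set" where
  "caterpillars m = {t. caterpillar t \<and> tsize t = m}"

lemma caterpillars_Suc:
  assumes "m \<ge> 2"
  shows "caterpillars (Suc m) = Node Leaf ` caterpillars m \<union> (\<lambda>s. Node s Leaf) ` caterpillars m"
proof
  show "caterpillars (Suc m) \<subseteq> Node Leaf ` caterpillars m \<union> (\<lambda>s. Node s Leaf) ` caterpillars m"
  proof
    fix t assume t: "t \<in> caterpillars (Suc m)"
    show "t \<in> Node Leaf ` caterpillars m \<union> (\<lambda>s. Node s Leaf) ` caterpillars m"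
      using t assms by (cases t) (auto simp: caterpillars_def image_iff)
  qed
qed (auto simp: caterpillars_def)

lemma card_caterpillars: "m \<ge> 2 \<Longrightarrow> card (caterpillars m) = 2 ^ (m - 2)"
proof (induction m rule: dec_induct)
  case base
  have "caterpillars 2 = {Node Leaf Leaf}"
  proof -
    have "t = Node Leaf Leaf" if "tsize t = 2" for t
    proof (cases t)
      case (Node l r)
      with that tsize_pos[of l] tsize_pos[of r] have "tsize l = 1" "tsize r = 1"
        by auto
      then show ?thesis
        using Node tsize_eq_1_iff by blast
    qed (use that in simp)
    then show ?thesis by (auto simp: caterpillars_def)
  qed
  then show ?case by simp
next
  case (step m)
  have fin: "finite (caterpillars m)"
    using finite_trees_of_size[of m] by (simp add: caterpillars_def)
  have disj: "Node Leaf ` caterpillars m \<inter> (\<lambda>s. Node s Leaf) ` caterpillars m = {}"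
    using step(1) by (auto simp: caterpillars_def)
  have "card (caterpillars (Suc m)) = card (caterpillars m) + card (caterpillars m)"
    unfolding caterpillars_Suc[OF step(1)] using fin disj
    by (simp add: card_Un_disjoint card_image inj_on_def)
  also have "\<dots> = 2 ^ Suc (m - 2)"
    using step(3) by simp
  also have "Suc (m - 2) = Suc m - 2"
    using step(1) by arith
  finally show ?case .
qed

section \<open>The recursion for the number of k-bounded trees\<close>

definition bounded_trees :: "nat \<Rightarrow> nat \<Rightarrow> btree set" where
  "bounded_trees k n = {t. tsize t = n \<and> bounded k t}"

definition bounded_pairs :: "nat \<Rightarrow> nat \<Rightarrow> (btree \<times> btree) set" where
  "bounded_pairs k n = {(l, r). bounded k l \<and> bounded k r \<and> tsize l + tsize r = n}"

lemma fcount_eq_card: "fcount k n = card (bounded_trees k n)"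
  unfolding fcount_def bounded_trees_def gamma_le_iff_bounded ..

lemma finite_bounded_trees: "finite (bounded_trees k n)"
  using finite_trees_of_size[of n] by (rule finite_subset[rotated]) (auto simp: bounded_trees_def)

lemma bounded_trees_0: "bounded_trees k 0 = {}"
proof -
  have "tsize t \<noteq> 0" for t
    using tsize_pos[of t] by linarith
  then show ?thesis
    by (auto simp: bounded_trees_def)
qed

lemma bounded_trees_1: "k \<ge> 1 \<Longrightarrow> bounded_trees k 1 = {Leaf}"
  unfolding bounded_trees_def using tsize_eq_1_iff bounded_Leaf by blast

lemma bounded_pairs_split: "bounded_pairs k n = (\<Union>i\<in>{0..n}. bounded_trees k i \<times> bounded_trees k (n - i))"
  by (auto simp: bounded_pairs_def bounded_trees_def)

lemma finite_bounded_pairs: "finite (bounded_pairs k n)"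
  unfolding bounded_pairs_split by (simp add: finite_bounded_trees)

lemma card_bounded_pairs:
  "card (bounded_pairs k n) = (\<Sum>i=0..n. card (bounded_trees k i) * card (bounded_trees k (n - i)))"
proof -
  have "card (\<Union>i\<in>{0..n}. bounded_trees k i \<times> bounded_trees k (n - i))
        = (\<Sum>i=0..n. card (bounded_trees k i \<times> bounded_trees k (n - i)))"
    by (rule card_UN_disjoint) (simp_all add: finite_bounded_trees, auto simp: bounded_trees_def)
  then show ?thesis
    by (simp add: bounded_pairs_split card_cartesian_product)
qed

text \<open>Both children of such a caterpillar are caterpillars of size at most k, one of them
  a leaf, so the join has exactly k + 1 leaves.\<close>

definition bad_pairs :: "nat \<Rightarrow> nat \<Rightarrow> (btree \<times> btree) set" where
  "bad_pairs k n = {(l, r) \<in> bounded_pairs k n. caterpillar (Node l r) \<and> n > k}"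

lemma bad_pairs_size:
  assumes "(l, r) \<in> bad_pairs k n"
  shows "n = k + 1"
proof -
  have cat: "l = Leaf \<or> r = Leaf" "caterpillar l" "caterpillar r"
    and bnd: "bounded k l" "bounded k r" and n: "n = tsize l + tsize r" "n > k"
    using assms by (auto simp: bad_pairs_def bounded_pairs_def)
  have "tsize l \<le> k" "tsize r \<le> k"
    using bnd cat caterpillar_bounded by blast+
  then show ?thesis
    using cat(1) n by auto
qed

lemma card_bad_pairs:
  assumes "n \<ge> 2"
  shows "card (bad_pairs k n) = (if n = k + 1 then 2 ^ (k - 1) else 0)"
proof (cases "n = k + 1")
  case True
  let ?cat_pairs = "{(l, r). caterpillar (Node l r) \<and> tsize l + tsize r = n}"
  have "bounded k l \<and> bounded k r" if "caterpillar (Node l r)" "tsize l + tsize r = n" for l r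
    using that True tsize_pos[of l] tsize_pos[of r] caterpillar_bounded by auto
  then have "bad_pairs k n = ?cat_pairs"
    using True by (auto simp: bad_pairs_def bounded_pairs_def simp del: caterpillar.simps)
  moreover have "caterpillars n = case_prod Node ` ?cat_pairs"
  proof
    show "caterpillars n \<subseteq> case_prod Node ` ?cat_pairs"
    proof
      fix t assume "t \<in> caterpillars n"
      then show "t \<in> case_prod Node ` ?cat_pairs"
        using assms by (cases t) (auto simp: caterpillars_def image_iff simp del: caterpillar.simps)
    qed
  qed (auto simp: caterpillars_def simp del: caterpillar.simps)
  then have "card (caterpillars n) = card ?cat_pairs"
    by (simp add: card_image inj_on_def)
  ultimately show ?thesis
    using card_caterpillars[OF assms] True by simp
next
  case False
  then have "bad_pairs k n = {}"
    using bad_pairs_size by fast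
  then show ?thesis
    using False by simp
qed

lemma bounded_trees_as_pairs:
  assumes "n \<ge> 2"
  shows "bounded_trees k n = case_prod Node ` (bounded_pairs k n - bad_pairs k n)"
proof
  show "bounded_trees k n \<subseteq> case_prod Node ` (bounded_pairs k n - bad_pairs k n)"
  proof
    fix t assume t: "t \<in> bounded_trees k n"
    then obtain l r where "t = Node l r"
      using assms by (cases t) (auto simp: bounded_trees_def)
    with t show "t \<in> case_prod Node ` (bounded_pairs k n - bad_pairs k n)"
      by (auto simp: bounded_trees_def bounded_pairs_def bad_pairs_def bounded_Node
               simp del: caterpillar.simps)
  qed
qed (auto simp: bounded_trees_def bounded_pairs_def bad_pairs_def bounded_Node
          simp del: caterpillar.simps)

lemma card_bounded_trees_rec:
  assumes "n \<ge> 2"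
  shows "real (card (bounded_trees k n))
       = (\<Sum>i=0..n. real (card (bounded_trees k i)) * real (card (bounded_trees k (n - i))))
         - (if n = k + 1 then 2 ^ (k - 1) else 0)"
proof -
  have sub: "bad_pairs k n \<subseteq> bounded_pairs k n"
    by (auto simp: bad_pairs_def)
  have "card (bounded_trees k n) = card (bounded_pairs k n - bad_pairs k n)"
    unfolding bounded_trees_as_pairs[OF assms] by (rule card_image) (auto simp: inj_on_def)
  also have "\<dots> = card (bounded_pairs k n) - card (bad_pairs k n)"
    by (rule card_Diff_subset[OF finite_subset[OF sub finite_bounded_pairs] sub])
  finally have "real (card (bounded_trees k n)) = real (card (bounded_pairs k n)) - real (card (bad_pairs k n))"
    using card_mono[OF finite_bounded_pairs sub] by simp
  then show ?thesis
    unfolding card_bounded_pairs card_bad_pairs[OF assms] by simp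
qed

section \<open>The generating function\<close>

unbundle fps_syntax

lemma Fminus_nth: "Fminus k $ n = real (card (bounded_trees k n))"
  by (simp add: Fminus_def fcount_eq_card bounded_trees_0)

lemma fps_quadratic_rhs_nth:
  fixes F :: "'a::comm_ring_1 fps"
  shows "(fps_X + F\<^sup>2 - fps_const c * fps_X ^ m) $ n
       = (if n = 1 then 1 else 0) + (\<Sum>i=0..n. F $ i * F $ (n - i)) - (if n = m then c else 0)"
  unfolding power2_eq_square by (simp add: fps_mult_nth[of F F])

lemma Fminus_functional_equation:
  assumes "k \<ge> 1"
  shows "Fminus k = fps_X + (Fminus k)\<^sup>2 - fps_const (2 ^ (k - 1)) * fps_X ^ (k + 1)"
proof (rule fps_ext)
  fix n :: nat
  let ?F = "Fminus k"
  consider "n = 0" | "n = 1" | "n \<ge> 2" by linarith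
  then have "?F $ n = (if n = 1 then 1 else 0) + (\<Sum>i=0..n. ?F $ i * ?F $ (n - i))
                      - (if n = k + 1 then 2 ^ (k - 1) else 0)"
  proof cases
    case 1
    then show ?thesis
      by (simp add: Fminus_nth bounded_trees_0)
  next
    case 2
    then show ?thesis
      using assms bounded_trees_1[OF assms] by (simp add: Fminus_nth bounded_trees_0)
  next
    case 3
    then show ?thesis
      using card_bounded_trees_rec[OF 3] by (simp add: Fminus_nth)
  qed
  then show "?F $ n = (fps_X + ?F\<^sup>2 - fps_const (2 ^ (k - 1)) * fps_X ^ (k + 1)) $ n"
    by (simp only: fps_quadratic_rhs_nth)
qed

lemma fps_quadratic_solution:
  fixes F :: "real fps"
  assumes F0: "F $ 0 = 0" and eq: "F = fps_X + F\<^sup>2 - fps_const c * fps_X ^ m"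
  shows "F = (1 - fps_radical (\<lambda>n x. root n x) 2
                    (1 - fps_const 4 * fps_X + fps_const (4 * c) * fps_X ^ m)) / fps_const 2"
proof -
  define A where "A = 1 - 2 * F"
  have "A\<^sup>2 = 1 - 4 * (F - F\<^sup>2)"
    unfolding A_def power2_eq_square by algebra
  also have "F - F\<^sup>2 = fps_X - fps_const c * fps_X ^ m"
    using eq by (simp add: algebra_simps)
  finally have A2: "A\<^sup>2 = 1 - fps_const 4 * fps_X + fps_const (4 * c) * fps_X ^ m"
    by (simp add: numeral_fps_const algebra_simps)
  have "fps_radical (\<lambda>n x. root n x) (Suc 1) (A ^ Suc 1) = A"
    by (rule radical_power) (simp_all add: A_def F0)
  then have "fps_radical (\<lambda>n x. root n x) 2 (1 - fps_const 4 * fps_X + fps_const (4 * c) * fps_X ^ m) = A"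
    using A2 by (simp add: numeral_2_eq_2)
  then show ?thesis
    by (simp add: A_def numeral_fps_const)
qed

theorem mainTheorem1:
  fixes k :: nat
  assumes "k \<ge> 1"
  shows "Fminus k = fps_X + (Fminus k)\<^sup>2 - fps_const (2 ^ (k - 1)) * fps_X ^ (k + 1)
       \<and> Fminus k = (1 - fps_radical (\<lambda>n x. root n x) 2
                         (1 - fps_const 4 * fps_X + fps_const (2 ^ (k + 1)) * fps_X ^ (k + 1)))
                     / fps_const 2"
proof
  show eq: "Fminus k = fps_X + (Fminus k)\<^sup>2 - fps_const (2 ^ (k - 1)) * fps_X ^ (k + 1)"
    using Fminus_functional_equation[OF assms] .
  have F0: "Fminus k $ 0 = 0"
    by (simp add: Fminus_nth bounded_trees_0)
  have "fps_const (4 * 2 ^ (k - 1)) = fps_const ((2::real) ^ (k + 1))"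
    using assms by (cases k) auto
  from fps_quadratic_solution[OF F0 eq, unfolded this]
  show "Fminus k = (1 - fps_radical (\<lambda>n x. root n x) 2
                         (1 - fps_const 4 * fps_X + fps_const (2 ^ (k + 1)) * fps_X ^ (k + 1)))
                     / fps_const 2" .
qed

end
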